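(* Let $\mathcal N=\{N_1,\ldots,N_\ell\}$ ($\ell\ge4$) be a family of $k$-sets satisfying properties (i) and (ii) below, and fix any run of the decomposition process described in the context. Let $0\le j\le t$, $1\le i\le\ell_j$, $Y\subseteq N_i$ with $|Y|\le j$, and let $C$ be a $3$-element set with $C\subseteq\bigl(N_i\cup\{a_i^{(0)},\dots,a_i^{(j)}\}\bigr)\setminus Y$ and $C\cap(V\setminus N_r)\ne\varnothing$ for all $r=1,\dots,\ell$. Let $p=C\cap N_i$. Then: (a) $|p|=1$ or $|p|=2$; (b) if $|p|=1$, then the vertex $v$ of $p$ lies in $(N_i\setminus Y)\cap G$ and $v$ is private for $N_i$ at time $j$; (c) if $|p|=2$, then $p$ is a $2$-subset of $N_i\setminus Y$ and $p$ is a private pair for $N_i$ at time $j$.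
   Context: Setting: $k\ge3$, $\mathcal N=\{N_1,\dots,N_\ell\}$ a family of $k$-subsets, $V=\bigcup N_i$, $n=|V|$, $m=n-k$, satisfying (i) $\bigcap_{i}N_i=\varnothing$ but $\bigcap_{j\ne i}N_j\ne\varnothing$ for all $i$; (ii) every $S\subseteq V$ with $|S|\ge k+1$ contains a $3$-set $T$ not contained in any $N_i$. Assume $\ell\ge4$. Decomposition process: Stage $0$: $\ell_0=\ell$; for each $i\le\ell_0$ choose $a_i^{(0)}\in\bigcap_{r\ne i}N_r$; kernel $A^{(0)}=\{a_1^{(0)},\dots,a_{\ell_0}^{(0)}\}$. Having defined stages $0,\dots,j$ (with surviving sets $N_1,\dots,N_{\ell_j}$, $\ell_j\ge4$, and kernels $A^{(0)},\dots,A^{(j)}$), consider $R^{(j)}=\{N_r\setminus\bigcup_{s\le j}A^{(s)} : r\le\ell_j\}$, which has empty intersection. If every subfamily of $R^{(j)}$ minimal with respect to having empty intersection has only $2$ or $3$ members, stop and set $t=j$. Otherwise choose such a minimal subfamily with at least $4$ members; after reindexing assume it consists of the truncations $N_r^{(j+1)}=N_r\setminus\bigcup_{s\le j}A^{(s)}$, $r\le\ell_{j+1}$; choose $a_i^{(j+1)}\in\bigcap_{r\le\ell_{j+1},r\ne i}N_r^{(j+1)}$ for $i\le\ell_{j+1}$, and let $A^{(j+1)}$ be the set of these. Let $A=\bigcup_{s=0}^tA^{(s)}$ (kernel vertices) and $G=V\setminus A$ (garbage vertices). Privacy: for $i\le\ell_j$, a vertex $v\in N_i$ is private for $N_i$ at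 time $j$ if no $N_r$ with $r\le\ell_j$, $r\ne i$, contains $v$; a $2$-set $p\subseteq N_i$ is a private pair for $N_i$ at time $j$ if no $N_r$ with $r\le\ell_j$, $r\neq i$, contains $p$. *)

theory Defs
  imports Main
begin

text \<open>Family N_1..N_l is modelled as N :: nat => 'a set on indices {1..l}.
  A run of the decomposition process is given by
  ls :: nat => nat (ls j = l_j), a :: nat => nat => 'a (a j i = a_i^(j)) and the
  stopping time t.  All reindexings are assumed already performed, i.e. the
  surviving sets at stage j are N_1,...,N_(l_j).\<close>

definition kernel :: "(nat \<Rightarrow> nat \<Rightarrow> 'a) \<Rightarrow> (nat \<Rightarrow> nat) \<Rightarrow> nat \<Rightarrow> 'a set" where
  "kernel a ls s = a s ` {1..ls s}"

definition trunc :: "(nat \<Rightarrow> 'a set) \<Rightarrow> (nat \<Rightarrow> nat \<Rightarrow> 'a) \<Rightarrow> (nat \<Rightarrow> nat) \<Rightarrow> nat \<Rightarrow> nat \<Rightarrow> 'a set" where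
  "trunc N a ls j r = N r - (\<Union>s\<le>j. kernel a ls s)"

definition min_empty :: "(nat \<Rightarrow> 'a set) \<Rightarrow> nat set \<Rightarrow> nat set \<Rightarrow> bool" where
  "min_empty F U I \<longleftrightarrow> I \<subseteq> U \<and> \<Inter>(F ` I) = {} \<and> (\<forall>J. J \<subset> I \<longrightarrow> \<Inter>(F ` J) \<noteq> {})"

definition decomp_run ::
  "(nat \<Rightarrow> 'a set) \<Rightarrow> nat \<Rightarrow> (nat \<Rightarrow> nat \<Rightarrow> 'a) \<Rightarrow> (nat \<Rightarrow> nat) \<Rightarrow> nat \<Rightarrow> bool" where
  "decomp_run N l a ls t \<longleftrightarrow>
     ls 0 = l \<and>
     (\<forall>j\<le>t. 4 \<le> ls j) \<and>
     (\<forall>i\<in>{1..l}. a 0 i \<in> \<Inter>(N ` ({1..l} - {i}))) \<and>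
     (\<forall>j<t. ls (Suc j) \<le> ls j \<and>
            min_empty (trunc N a ls j) {1..ls j} {1..ls (Suc j)} \<and>
            4 \<le> card (trunc N a ls j ` {1..ls (Suc j)}) \<and>
            (\<forall>i\<in>{1..ls (Suc j)}.
               a (Suc j) i \<in> \<Inter>(trunc N a ls j ` ({1..ls (Suc j)} - {i})))) \<and>
     (\<forall>I. min_empty (trunc N a ls t) {1..ls t} I \<longrightarrow>
            card (trunc N a ls t ` I) = 2 \<or> card (trunc N a ls t ` I) = 3)"

definition private_vertex :: "(nat \<Rightarrow> 'a set) \<Rightarrow> (nat \<Rightarrow> nat) \<Rightarrow> nat \<Rightarrow> nat \<Rightarrow> 'a \<Rightarrow> bool" where
  "private_vertex N ls j i v \<longleftrightarrow> v \<in> N i \<and> (\<forall>r\<in>{1..ls j}. r \<noteq> i \<longrightarrow> v \<notin> N r)"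

definition private_pair :: "(nat \<Rightarrow> 'a set) \<Rightarrow> (nat \<Rightarrow> nat) \<Rightarrow> nat \<Rightarrow> nat \<Rightarrow> 'a set \<Rightarrow> bool" where
  "private_pair N ls j i p \<longleftrightarrow> card p = 2 \<and> p \<subseteq> N i \<and> (\<forall>r\<in>{1..ls j}. r \<noteq> i \<longrightarrow> \<not> p \<subseteq> N r)"

end

theory Submission
  imports Defs
begin

text \<open>Every vertex of C outside N_i is a kernel vertex a_i^(s) with s \<le> j, and such a vertex lies
  in every other set surviving at time j.  As C is contained in no N_r, its trace C \<inter> N_i is
  therefore contained in no other surviving set, i.e. it is private; it is a proper nonempty
  part of the 3-set C.  A private vertex is garbage, because a kernel vertex of stage s lies in
  all but one of the at least four sets surviving at stage s.\<close>

lemma decomp_run_ls_antimono: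
  assumes run: "decomp_run N l a ls t" and "s \<le> j" "j \<le> t"
  shows "ls j \<le> ls s"
  using assms(2,3)
proof (induction j rule: dec_induct)
  case base
  show ?case by simp
next
  case (step n)
  then have "ls (Suc n) \<le> ls n"
    using run unfolding decomp_run_def by auto
  with step show ?case by simp
qed

lemma decomp_run_ls_le:
  assumes "decomp_run N l a ls t" "j \<le> t"
  shows "ls j \<le> l"
  using decomp_run_ls_antimono[OF assms(1) _ assms(2), of 0] assms(1)
  unfolding decomp_run_def by simp

lemma decomp_run_kernel_mem:
  assumes run: "decomp_run N l a ls t"
    and "s \<le> t" "r \<in> {1..ls s}" "x \<in> {1..ls s}" "x \<noteq> r"
  shows "a s r \<in> N x"
proof (cases s)
  case 0
  then show ?thesis
    using run assms(3-5) unfolding decomp_run_def by auto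
next
  case (Suc s')
  then have "a s r \<in> trunc N a ls s' x"
    using run assms unfolding decomp_run_def by auto
  then show ?thesis
    unfolding trunc_def by blast
qed

lemma decomp_run_kernel_column_subset:
  assumes run: "decomp_run N l a ls t"
    and "j \<le> t" "i \<in> {1..ls j}" "r \<in> {1..ls j}" "r \<noteq> i"
  shows "{a s i | s. s \<le> j} \<subseteq> N r"
proof clarify
  fix s assume "s \<le> j"
  then have "ls j \<le> ls s"
    using decomp_run_ls_antimono[OF run] assms(2) by blast
  then show "a s i \<in> N r"
    using decomp_run_kernel_mem[OF run, of s i r] \<open>s \<le> j\<close> assms(2-5) by auto
qed

lemma decomp_run_private_vertex_not_kernel:
  assumes run: "decomp_run N l a ls t"
    and "s \<le> t" "j \<le> t" "private_vertex N ls j i v"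
  shows "v \<notin> kernel a ls s"
proof
  assume "v \<in> kernel a ls s"
  then obtain r where r: "r \<in> {1..ls s}" "v = a s r"
    unfolding kernel_def by blast
  have "4 \<le> ls s" "4 \<le> ls j"
    using run assms(2,3) unfolding decomp_run_def by auto
  define x :: nat where "x = (if 1 \<notin> {i, r} then 1 else if 2 \<notin> {i, r} then 2 else 3)"
  have x: "x \<in> {1..4}" "x \<noteq> i" "x \<noteq> r"
    unfolding x_def by auto
  then have "v \<in> N x"
    using decomp_run_kernel_mem[OF run assms(2) r(1), of x] r \<open>4 \<le> ls s\<close> by auto
  moreover have "x \<in> {1..ls j}"
    using x \<open>4 \<le> ls j\<close> by auto
  ultimately show False
    using assms(4) x unfolding private_vertex_def by blast
qed

lemma decomp_run_trace_not_in_other_set: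
  assumes run: "decomp_run N l a ls t"
    and "j \<le> t" "i \<in> {1..ls j}" "r \<in> {1..ls j}" "r \<noteq> i"
    and "C \<subseteq> N i \<union> {a s i | s. s \<le> j}" "\<not> C \<subseteq> N r"
  shows "\<not> C \<inter> N i \<subseteq> N r"
  using decomp_run_kernel_column_subset[OF run assms(2-5)] assms(6,7) by blast

theorem lemma4:
  fixes N :: "nat \<Rightarrow> 'a set" and k l t j i :: nat
    and a :: "nat \<Rightarrow> nat \<Rightarrow> 'a" and ls :: "nat \<Rightarrow> nat"
    and Y C :: "'a set"
  defines "V \<equiv> \<Union>(N ` {1..l})"
  defines "G \<equiv> V - (\<Union>s\<le>t. kernel a ls s)"
  assumes k3: "3 \<le> k" and l4: "4 \<le> l"
    and card_N: "\<forall>r\<in>{1..l}. card (N r) = k"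
    and prop_i: "\<Inter>(N ` {1..l}) = {} \<and> (\<forall>r\<in>{1..l}. \<Inter>(N ` ({1..l} - {r})) \<noteq> {})"
    and prop_ii: "\<forall>S. S \<subseteq> V \<and> k + 1 \<le> card S \<longrightarrow>
                    (\<exists>T. T \<subseteq> S \<and> card T = 3 \<and> (\<forall>r\<in>{1..l}. \<not> T \<subseteq> N r))"
    and run: "decomp_run N l a ls t"
    and j: "j \<le> t" and i: "1 \<le> i" "i \<le> ls j"
    and Y: "Y \<subseteq> N i" "card Y \<le> j"
    and C: "card C = 3" "C \<subseteq> (N i \<union> {a s i | s. s \<le> j}) - Y"
    and C_out: "\<forall>r\<in>{1..l}. C \<inter> (V - N r) \<noteq> {}"
  shows "(card (C \<inter> N i) = 1 \<or> card (C \<inter> N i) = 2) \<and>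
         (card (C \<inter> N i) = 1 \<longrightarrow>
            (\<forall>v. C \<inter> N i = {v} \<longrightarrow> v \<in> (N i - Y) \<inter> G \<and> private_vertex N ls j i v)) \<and>
         (card (C \<inter> N i) = 2 \<longrightarrow>
            C \<inter> N i \<subseteq> N i - Y \<and> private_pair N ls j i (C \<inter> N i))"
proof -
  have "ls j \<le> l" "4 \<le> ls j"
    using decomp_run_ls_le[OF run j] run j unfolding decomp_run_def by auto
  then have i_range: "i \<in> {1..ls j}" "i \<in> {1..l}"
    using i by auto
  have trace_private: "\<not> C \<inter> N i \<subseteq> N r" if r: "r \<in> {1..ls j}" "r \<noteq> i" for r
  proof (rule decomp_run_trace_not_in_other_set[OF run j i_range(1) r])
    show "C \<subseteq> N i \<union> {a s i | s. s \<le> j}"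
      using C(2) by blast
    have "r \<in> {1..l}"
      using r \<open>ls j \<le> l\<close> by simp
    then show "\<not> C \<subseteq> N r"
      using C_out by blast
  qed
  have "C \<inter> N i \<noteq> {}"
    using trace_private[of 1] trace_private[of 2] \<open>4 \<le> ls j\<close> by (cases "i = 1") auto
  moreover have "C \<inter> N i \<subset> C"
    using C_out i_range(2) by blast
  moreover have "finite C"
    using C(1) card.infinite by fastforce
  ultimately have card_trace: "card (C \<inter> N i) = 1 \<or> card (C \<inter> N i) = 2"
    using psubset_card_mono[of C "C \<inter> N i"] C(1) card_0_eq[of "C \<inter> N i"] by fastforce
  have vertex: "v \<in> (N i - Y) \<inter> G \<and> private_vertex N ls j i v" if v: "C \<inter> N i = {v}" for v
  proof -
    have "private_vertex N ls j i v"
      using trace_private v unfolding private_vertex_def by auto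
    moreover have "v \<in> V"
      using v i_range(2) unfolding V_def by auto
    ultimately show ?thesis
      using decomp_run_private_vertex_not_kernel[OF run _ j] v C(2) unfolding G_def by blast
  qed
  have pair: "C \<inter> N i \<subseteq> N i - Y \<and> private_pair N ls j i (C \<inter> N i)" if "card (C \<inter> N i) = 2"
    using that C(2) trace_private unfolding private_pair_def by auto
  show ?thesis
    using card_trace vertex pair by blast
qed

end
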